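(* Let $L$ be as in the context, and suppose $L=L_v+\mathbb{Z}v$ is an orthogonal direct sum with $v^2=2$. If $L_v$ is achiral then $L$ is achiral. More precisely, for any cell $P_v$ of $\Lambda(L_v)$, any automorphism $f_v$ of $L_v$ with $f_v(P_v)=P_v$ which is $P_v$-direct and $\mathbb{Z}/3$-reversing extends to an automorphism $f$ of $L$ which is $\mathbb{Z}/3$-reversing, preserves some cell $P$ of $\Lambda(L)$, and is $P$-direct.
   Context: Lattices considered: integral lattices of signature $(n,1)$ whose discriminant group is $\mathbb{Z}/3\oplus D$ with $D$ $2$-periodic. For such a lattice $L$: $V_k=\{w\in L:w^2=k,\ 2wx/w^2\in\mathbb{Z}\ \forall x\in L\}$ ($k=2,6$); $\Lambda(L)=\{x\in L\otimes\mathbb{R}:x^2<0\}/\mathbb{R}^*$; cells are closures of components of the complement of the hyperplanes $w^\perp$, $w\in V_2\cup V_6$. A cell $P$ lifts to two opposite pieces $\pm P^\sharp$ in $\{x^2<0\}/\mathbb{R}_{>0}$; $g$ with $g(P)=P$ is $P$-direct if $g(P^\sharp)=P^\sharp$, $P$-reversing otherwise. $g$ is $\mathbb{Z}/3$-direct if it acts trivially on the $3$-primary part of the discriminant group, $\mathbb{Z}/3$-reversing otherwise. $L$ is achiral if for some cell $P$ there is a $\mathbb{Z}/3$-direct $P$-reversing $g$ with $g(P)=P$ (equivalently, a $\mathbb{Z}/3$-reversing $P$-direct one, since these differ by the sign $-1$). *)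

theory Defs
  imports "HOL-Analysis.Analysis"
begin

text \<open>A lattice of rank N is modelled as the standard integer lattice
  in real^'n (N = CARD('n)) equipped with an integral symmetric Gram matrix G.
  Elements of L are the integer vectors; L tensor R is real^'n.\<close>

definition bf :: "real^'n^'n \<Rightarrow> real^'n \<Rightarrow> real^'n \<Rightarrow> real" where
  "bf G x y = x \<bullet> (G *v y)"

definition latt :: "(real^'n) set" where
  "latt = {x. \<forall>i. x $ i \<in> \<int>}"

definition integral_gram :: "real^'n^'n \<Rightarrow> bool" where
  "integral_gram G \<longleftrightarrow> transpose G = G \<and> (\<forall>i j. G $ i $ j \<in> \<int>)"

text \<open>Signature (n,1), n = CARD('n) - 1 (Sylvester inertia: congruent over the
  reals to diag(1,...,1,-1)).\<close>
definition hyperbolic_sig :: "real^'n^'n \<Rightarrow> bool" where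
  "hyperbolic_sig G \<longleftrightarrow> (\<exists>(P::real^'n^'n) k. invertible P \<and>
      transpose P ** G ** P = (\<chi> i j. if i = j then (if i = k then -1 else 1) else 0))"

text \<open>Dual lattice L^*; discriminant group A = L^*/L.\<close>
definition dual :: "real^'n^'n \<Rightarrow> (real^'n) set" where
  "dual G = {x. \<forall>y\<in>latt. bf G x y \<in> \<int>}"

definition latt_cong :: "(real^'n) set \<Rightarrow> ((real^'n) \<times> (real^'n)) set" where
  "latt_cong S = {(x,y). x \<in> S \<and> y \<in> S \<and> x - y \<in> latt}"

text \<open>3-primary part of the discriminant group, as cosets x + L with 3x in L.\<close>
definition disc3 :: "real^'n^'n \<Rightarrow> (real^'n) set" where
  "disc3 G = {x \<in> dual G. 3 *\<^sub>R x \<in> latt}"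

text \<open>Discriminant group is Z/3 + D with 2D = 0: equivalently, 6A = 0 and the
  3-primary part has exactly 3 elements.\<close>
definition disc_ok :: "real^'n^'n \<Rightarrow> bool" where
  "disc_ok G \<longleftrightarrow> (\<forall>x\<in>dual G. 6 *\<^sub>R x \<in> latt) \<and>
      card (disc3 G // latt_cong (disc3 G)) = 3"

definition good_lattice :: "real^'n^'n \<Rightarrow> bool" where
  "good_lattice G \<longleftrightarrow> integral_gram G \<and> hyperbolic_sig G \<and> disc_ok G"

definition aut :: "real^'n^'n \<Rightarrow> real^'n^'n \<Rightarrow> bool" where
  "aut G M \<longleftrightarrow> (\<lambda>x. M *v x) ` latt = latt \<and>
      (\<forall>x y. bf G (M *v x) (M *v y) = bf G x y)"

definition z3_direct :: "real^'n^'n \<Rightarrow> real^'n^'n \<Rightarrow> bool" where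
  "z3_direct G M \<longleftrightarrow> (\<forall>x\<in>disc3 G. M *v x - x \<in> latt)"

definition V :: "real^'n^'n \<Rightarrow> real \<Rightarrow> (real^'n) set" where
  "V G k = {w \<in> latt. bf G w w = k \<and> (\<forall>x\<in>latt. 2 * bf G w x / k \<in> \<int>)}"

definition negcone :: "real^'n^'n \<Rightarrow> (real^'n) set" where
  "negcone G = {x. bf G x x < 0}"

definition mirrors :: "real^'n^'n \<Rightarrow> (real^'n) set" where
  "mirrors G = {x. \<exists>w \<in> V G 2 \<union> V G 6. bf G w x = 0}"

text \<open>Lifted cells: a lift P^# of a cell P, viewed as a cone in {x^2<0}
  (i.e. the preimage of P^# in {x^2<0}/R_{>0}): the closure in {x^2<0} of a
  connected component of the complement of the mirrors.\<close>
definition half_cell :: "real^'n^'n \<Rightarrow> (real^'n) set \<Rightarrow> bool" where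
  "half_cell G Q \<longleftrightarrow> (\<exists>K \<in> components (negcone G - mirrors G).
      Q = closure K \<inter> negcone G)"

text \<open>Q is a lift of the cell P; the cell P of Lambda(L) is represented by its
  preimage in {x^2<0}.\<close>
definition cell_lift :: "real^'n^'n \<Rightarrow> (real^'n) set \<Rightarrow> (real^'n) set \<Rightarrow> bool" where
  "cell_lift G P Q \<longleftrightarrow> half_cell G Q \<and> P = Q \<union> uminus ` Q"

definition cell :: "real^'n^'n \<Rightarrow> (real^'n) set \<Rightarrow> bool" where
  "cell G P \<longleftrightarrow> (\<exists>Q. cell_lift G P Q)"

definition preserves :: "real^'n^'n \<Rightarrow> (real^'n) set \<Rightarrow> bool" where
  "preserves M P \<longleftrightarrow> (\<lambda>x. M *v x) ` P = P"

definition cell_direct :: "real^'n^'n \<Rightarrow> real^'n^'n \<Rightarrow> (real^'n) set \<Rightarrow> bool" where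
  "cell_direct G M P \<longleftrightarrow> (\<exists>Q. cell_lift G P Q \<and> (\<lambda>x. M *v x) ` Q = Q)"

definition achiral :: "real^'n^'n \<Rightarrow> bool" where
  "achiral G \<longleftrightarrow> (\<exists>P M. cell G P \<and> aut G M \<and> preserves M P \<and>
      z3_direct G M \<and> \<not> cell_direct G M P)"

text \<open>Orthogonal direct sum L = L_v + Z v with v^2 = 2: basis of L_v indexed by
  'n, v is the extra basis vector indexed by None.\<close>
definition sum_gram :: "real^'n^'n \<Rightarrow> real^('n option)^('n option)" where
  "sum_gram G = (\<chi> i j. case (i, j) of (Some a, Some b) \<Rightarrow> G $ a $ b
      | (None, None) \<Rightarrow> 2 | _ \<Rightarrow> 0)"

definition emb :: "real^'n \<Rightarrow> real^('n option)" where
  "emb x = (\<chi> j. case j of Some i \<Rightarrow> x $ i | None \<Rightarrow> 0)"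

end

theory Submission
  imports Defs
begin

text \<open>Extending \<open>f\<^sub>v\<close> by the identity on \<open>\<int>v\<close> gives an automorphism \<open>f\<close> of \<open>L\<close>, which is
  \<open>\<int>/3\<close>-reversing with \<open>f\<^sub>v\<close> because the 3-primary discriminant of \<open>L\<^sub>v\<close> embeds into that
  of \<open>L\<close>. A root of \<open>L\<close> orthogonal to a point \<open>y\<close> of a chamber of \<open>L\<^sub>v\<close> lies in \<open>\<int>v\<close>, so by
  local finiteness of the mirrors the only mirror of \<open>L\<close> near \<open>y\<close> is \<open>v\<^sup>\<perp>\<close>, and the half-ball
  above \<open>y\<close> lies in a single chamber of \<open>L\<close>. This chamber does not change as \<open>y\<close> moves through
  the chamber of \<open>L\<^sub>v\<close>, which a \<open>P\<^sub>v\<close>-direct \<open>f\<^sub>v\<close> preserves; hence \<open>f\<close> preserves it and is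
  direct on its cell.

  For achirality, negate: \<open>-1\<close> swaps the two (distinct) lifts of every cell and acts as \<open>-1\<close> on
  the nontrivial \<open>\<int>/3\<close> part, so it exchanges \<open>P\<close>-direct with \<open>P\<close>-reversing and \<open>\<int>/3\<close>-direct
  with \<open>\<int>/3\<close>-reversing. Negate a witness for \<open>L\<^sub>v\<close>, extend it, and negate the extension.\<close>

section \<open>The bilinear form and automorphisms\<close>

lemma bf_zero_left [simp]: "bf G 0 y = 0"
  by (simp add: bf_def)

lemma bf_zero_right [simp]: "bf G x 0 = 0"
  by (simp add: bf_def)

lemma bf_add_left: "bf G (x + y) z = bf G x z + bf G y z"
  by (simp add: bf_def inner_add_left)

lemma bf_add_right: "bf G x (y + z) = bf G x y + bf G x z"
  by (simp add: bf_def matrix_vector_right_distrib inner_add_right)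

lemma bf_scale_left: "bf G (c *\<^sub>R x) y = c * bf G x y"
  by (simp add: bf_def)

lemma bf_scale_right: "bf G x (c *\<^sub>R y) = c * bf G x y"
  by (simp add: bf_def matrix_vector_mult_scaleR)

lemma bf_minus_left: "bf G (- x) y = - bf G x y"
  by (simp add: bf_def)

lemma bf_minus_right: "bf G x (- y) = - bf G x y"
  using bf_scale_right[of G x "-1" y] by simp

lemma bf_diff_left: "bf G (x - y) z = bf G x z - bf G y z"
  using bf_add_left[of G x "- y" z] by (simp add: bf_minus_left)

lemma bf_diff_right: "bf G z (x - y) = bf G z x - bf G z y"
  using bf_add_right[of G z x "- y"] by (simp add: bf_minus_right)

lemma bf_sym: "transpose G = G \<Longrightarrow> bf G x y = bf G y x"
  by (metis bf_def dot_lmul_matrix inner_commute transpose_matrix_vector)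

lemma inner_matrix_vector_transpose: "((A::real^'n^'m) *v x) \<bullet> y = x \<bullet> (transpose A *v y)"
  by (metis dot_lmul_matrix transpose_matrix_vector transpose_transpose)

lemma bf_congruence: "bf G (P *v x) (P *v y) = bf (transpose P ** G ** P) x y"
  unfolding bf_def inner_matrix_vector_transpose
  by (simp only: matrix_vector_mul_assoc matrix_mul_assoc)

lemma continuous_on_bf:
  "continuous_on S f \<Longrightarrow> continuous_on S g \<Longrightarrow> continuous_on S (\<lambda>w. bf H (f w) (g w))"
  unfolding bf_def
  by (intro continuous_on_inner bounded_linear.continuous_on[OF matrix_vector_mul_bounded_linear])

lemma matrix_uminus_mult: "(- (M::real^'n^'m)) *v x = - (M *v x)"
  by (simp add: matrix_vector_mult_def sum_negf vec_eq_iff)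

lemma mult_uminus: "(M::real^'n^'m) *v (- x) = - (M *v x)"
  by (simp add: matrix_vector_mult_def sum_negf vec_eq_iff)

lemma uminus_image_eq_minus_one: "uminus ` A = (\<lambda>x. (- mat 1 :: real^'n^'n) *v x) ` A"
  by (simp add: matrix_uminus_mult)

lemma latt_add: "x \<in> latt \<Longrightarrow> y \<in> latt \<Longrightarrow> x + y \<in> latt"
  by (simp add: latt_def)

lemma latt_diff: "x \<in> latt \<Longrightarrow> y \<in> latt \<Longrightarrow> x - y \<in> latt"
  by (simp add: latt_def)

lemma latt_uminus_iff [simp]: "- x \<in> latt \<longleftrightarrow> x \<in> latt"
  by (simp add: latt_def minus_in_Ints_iff)

lemma latt_scale: "c \<in> \<int> \<Longrightarrow> x \<in> latt \<Longrightarrow> c *\<^sub>R x \<in> latt"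
  by (simp add: latt_def)

lemma latt_zero [simp]: "0 \<in> latt"
  by (simp add: latt_def)

lemma uminus_image_latt: "uminus ` latt = latt"
proof
  show "uminus ` latt \<subseteq> latt"
    by auto
  show "latt \<subseteq> uminus ` latt"
    by (rule subsetI, rule image_eqI[of _ _ "- x" for x]) auto
qed

lemma aut_latt: "aut G M \<Longrightarrow> x \<in> latt \<Longrightarrow> M *v x \<in> latt"
  unfolding aut_def by blast

lemma aut_latt_obtain: "aut G M \<Longrightarrow> y \<in> latt \<Longrightarrow> \<exists>x\<in>latt. y = M *v x"
  unfolding aut_def by blast

lemma aut_bf: "aut G M \<Longrightarrow> bf G (M *v x) (M *v y) = bf G x y"
  unfolding aut_def by blast

lemma aut_surj:
  assumes "aut G M"
  shows "surj (\<lambda>x. M *v x)"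
proof -
  have "Basis \<subseteq> range (\<lambda>x. M *v x)"
  proof
    fix b :: "real^'a" assume "b \<in> Basis"
    then have "b \<in> latt"
      by (auto simp: Basis_vec_def latt_def axis_def)
    then show "b \<in> range (\<lambda>x. M *v x)"
      using aut_latt_obtain[OF assms] by blast
  qed
  moreover have "subspace (range (\<lambda>x. M *v x))"
    by (rule linear_subspace_image) auto
  ultimately show ?thesis
    by (metis span_Basis span_minimal top.extremum_uniqueI)
qed

lemma aut_inverse:
  assumes M: "aut G M"
  obtains N where "aut G N" "\<And>x. M *v (N *v x) = x" "\<And>x. N *v (M *v x) = x"
proof -
  obtain N where "M ** N = mat 1"
    using aut_surj[OF M] matrix_right_invertible_surjective by blast
  then have "N ** M = mat 1"
    using matrix_left_right_inverse by blast
  have MN: "M *v (N *v x) = x" for x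
    by (simp add: matrix_vector_mul_assoc \<open>M ** N = mat 1\<close>)
  have NM: "N *v (M *v x) = x" for x
    by (simp add: matrix_vector_mul_assoc \<open>N ** M = mat 1\<close>)
  have "(\<lambda>x. N *v x) ` latt = latt"
  proof
    show "(\<lambda>x. N *v x) ` latt \<subseteq> latt"
      using aut_latt_obtain[OF M] NM by fastforce
    show "latt \<subseteq> (\<lambda>x. N *v x) ` latt"
      using aut_latt[OF M] NM by (metis image_eqI subsetI)
  qed
  moreover have "bf G (N *v x) (N *v y) = bf G x y" for x y
    using aut_bf[OF M, of "N *v x" "N *v y"] by (simp add: MN)
  ultimately have "aut G N"
    by (simp add: aut_def)
  then show ?thesis
    using that MN NM by blast
qed

lemma aut_uminus:
  assumes M: "aut G M"
  shows "aut G (- M)"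
proof -
  have "(\<lambda>x. (- M) *v x) ` latt = uminus ` (\<lambda>x. M *v x) ` latt"
    by (simp add: matrix_uminus_mult image_image)
  also have "\<dots> = latt"
    using M by (simp add: aut_def uminus_image_latt)
  moreover have "bf G ((- M) *v x) ((- M) *v y) = bf G x y" for x y
    using aut_bf[OF M] by (simp add: matrix_uminus_mult bf_minus_left bf_minus_right)
  ultimately show ?thesis
    unfolding aut_def by blast
qed

lemma aut_one: "aut G (mat 1)"
  by (simp add: aut_def)

lemma aut_minus_one: "aut G (- mat 1)"
  by (rule aut_uminus[OF aut_one])

section \<open>Lorentzian forms and local finiteness of the mirrors\<close>

definition lorentzian :: "real^'m^'m \<Rightarrow> bool" where
  "lorentzian H \<longleftrightarrow> transpose H = H \<and>
     (\<forall>x w. bf H x x < 0 \<longrightarrow> bf H w x = 0 \<longrightarrow> w \<noteq> 0 \<longrightarrow> bf H w w > 0)"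

lemma lorentzianD:
  "lorentzian H \<Longrightarrow> bf H x x < 0 \<Longrightarrow> bf H w x = 0 \<Longrightarrow> w \<noteq> 0 \<Longrightarrow> bf H w w > 0"
  unfolding lorentzian_def by blast

lemma bf_sign_diagonal:
  fixes y :: "real^'m"
  assumes "y $ k = 0"
  shows "bf (\<chi> i j. if i = j then (if i = k then -1 else 1) else 0) y y = (\<Sum>i\<in>UNIV. (y $ i)\<^sup>2)"
proof -
  have "((\<chi> i j. if i = j then (if i = k then -1 else 1) else 0) *v y) $ i = (if i = k then - y $ i else y $ i)"
    for i :: 'm
    by (simp add: matrix_vector_mult_def if_distrib[of "\<lambda>a. a * _"] cong: if_cong)
  then show ?thesis
    using assms by (auto simp: bf_def inner_vec_def power2_eq_square intro!: sum.cong)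
qed

lemma hyperbolic_sig_positive_hyperplane:
  fixes H :: "real^'m^'m"
  assumes "hyperbolic_sig H"
  obtains N :: "real^'m^'m" and k where "\<And>u. (N *v u) $ k = 0 \<Longrightarrow> u \<noteq> 0 \<Longrightarrow> bf H u u > 0"
proof -
  obtain P :: "real^'m^'m" and k where "invertible P"
    and diag: "transpose P ** H ** P = (\<chi> i j. if i = j then (if i = k then -1 else 1) else 0)"
    using assms unfolding hyperbolic_sig_def by blast
  then obtain N where "P ** N = mat 1"
    unfolding invertible_def by blast
  then have PN: "P *v (N *v u) = u" for u
    by (simp add: matrix_vector_mul_assoc)
  have "bf H u u > 0" if "(N *v u) $ k = 0" "u \<noteq> 0" for u
  proof -
    have "bf H u u = bf (transpose P ** H ** P) (N *v u) (N *v u)"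
      by (metis PN bf_congruence)
    also have "\<dots> = (\<Sum>i\<in>UNIV. ((N *v u) $ i)\<^sup>2)"
      unfolding diag by (rule bf_sign_diagonal[OF that(1)])
    finally have "bf H u u = (\<Sum>i\<in>UNIV. ((N *v u) $ i)\<^sup>2)" .
    moreover have "N *v u \<noteq> 0"
      by (metis PN matrix_vector_mult_0_right that(2))
    ultimately show ?thesis
      by (auto simp: sum_nonneg sum_nonneg_eq_0_iff vec_eq_iff less_le)
  qed
  then show ?thesis
    using that by blast
qed

text \<open>The plane spanned by a negative \<open>x\<close> and a non-positive \<open>w \<perp> x\<close> would meet the
  hyperplane on which the signature makes the form positive definite.\<close>
lemma hyperbolic_sig_imp_lorentzian:
  fixes H :: "real^'m^'m"
  assumes sym: "transpose H = H" and hyp: "hyperbolic_sig H"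
  shows "lorentzian H"
  unfolding lorentzian_def
proof (intro conjI sym allI impI)
  fix x w :: "real^'m"
  assume neg: "bf H x x < 0" and orth: "bf H w x = 0" and "w \<noteq> 0"
  obtain N :: "real^'m^'m" and k where pos: "\<And>u. (N *v u) $ k = 0 \<Longrightarrow> u \<noteq> 0 \<Longrightarrow> bf H u u > 0"
    using hyperbolic_sig_positive_hyperplane[OF hyp] by blast
  show "bf H w w > 0"
  proof (rule ccontr)
    assume nonpos: "\<not> bf H w w > 0"
    define a where "a = (N *v x) $ k"
    define b where "b = (N *v w) $ k"
    have "b \<noteq> 0"
      using pos[of w] nonpos \<open>w \<noteq> 0\<close> by (auto simp: b_def)
    define u where "u = b *\<^sub>R x - a *\<^sub>R w"
    have "(N *v u) $ k = 0"
      by (simp add: u_def a_def b_def matrix_vector_mult_diff_distrib matrix_vector_mult_scaleR)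
    then have "bf H u u \<ge> 0"
      using pos[of u] by (cases "u = 0") auto
    moreover have "bf H u u = b * b * bf H x x + a * a * bf H w w"
      using orth bf_sym[OF sym, of x w]
      by (simp add: u_def bf_diff_left bf_diff_right bf_scale_left bf_scale_right algebra_simps)
    moreover have "b * b * bf H x x < 0"
      using \<open>b \<noteq> 0\<close> neg by (metis mult_pos_neg not_real_square_gt_zero)
    moreover have "a * a * bf H w w \<le> 0"
      using nonpos by (simp add: mult_nonneg_nonpos)
    ultimately show False
      by linarith
  qed
qed

lemma bf_bounded:
  fixes H :: "real^'m^'m"
  obtains K where "K > 0" "\<And>x y. \<bar>bf H x y\<bar> \<le> norm x * norm y * K"
proof -
  obtain K where K: "K > 0" "\<And>y. norm (H *v y) \<le> norm y * K"
    using bounded_linear.pos_bounded[OF matrix_vector_mul_bounded_linear[of H]] by blast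
  have "\<bar>bf H x y\<bar> \<le> norm x * norm y * K" for x y
  proof -
    have "\<bar>bf H x y\<bar> \<le> norm x * norm (H *v y)"
      unfolding bf_def by (rule Cauchy_Schwarz_ineq2)
    also have "\<dots> \<le> norm x * (norm y * K)"
      using K(2) by (simp add: mult_left_mono)
    finally show ?thesis
      by (simp add: mult.assoc)
  qed
  then show ?thesis
    using that K(1) by blast
qed

text \<open>Writing \<open>w = w' + a x\<close> with \<open>w' \<perp> x\<close>, the left-hand side is
  \<open>bf H w' w' + a\<^sup>2 (- bf H x x)\<close>.\<close>
lemma lorentzian_add_square_pos:
  fixes H :: "real^'m^'m"
  assumes L: "lorentzian H" and neg: "bf H x x < 0" and "w \<noteq> 0"
  shows "bf H w w + 2 / (- bf H x x) * (bf H w x)\<^sup>2 > 0"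
proof -
  define q where "q = bf H x x"
  have q: "q < 0" "q \<noteq> 0"
    using neg by (auto simp: q_def)
  define a where "a = bf H w x / q"
  define w' where "w' = w - a *\<^sub>R x"
  have orth: "bf H w' x = 0"
    using q by (simp add: w'_def bf_diff_left bf_scale_left a_def q_def)
  then have "bf H x w' = 0"
    using L by (simp add: lorentzian_def bf_sym)
  moreover have "w = w' + a *\<^sub>R x"
    by (simp add: w'_def)
  ultimately have "bf H w w = bf H w' w' + a * a * q"
    using orth by (simp add: q_def bf_add_left bf_add_right bf_scale_left bf_scale_right)
  moreover have "bf H w x = a * q"
    using q by (simp add: a_def)
  ultimately have "bf H w w + 2 / (- bf H x x) * (bf H w x)\<^sup>2 = bf H w' w' + a * a * (- q)"
    using q by (simp add: q_def[symmetric] power2_eq_square field_simps)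
  moreover have "w' \<noteq> 0 \<Longrightarrow> bf H w' w' > 0"
    using lorentzianD[OF L neg orth] .
  moreover have "w' = 0 \<Longrightarrow> a \<noteq> 0"
    using \<open>w \<noteq> 0\<close> by (auto simp: w'_def)
  moreover have "a * a * q \<le> 0"
    by (rule mult_nonneg_nonpos[OF zero_le_square]) (use q in simp)
  moreover have "a \<noteq> 0 \<Longrightarrow> a * a * q < 0"
    using q by (metis mult_pos_neg not_real_square_gt_zero)
  ultimately show ?thesis
    by (cases "w' = 0") auto
qed

lemma lorentzian_norm_bound:
  fixes H :: "real^'m^'m"
  assumes L: "lorentzian H" and neg: "bf H x x < 0"
  obtains A B where "A \<ge> 0" "B > 0" "\<And>w. (norm w)\<^sup>2 \<le> A * (bf H w x)\<^sup>2 + B * bf H w w"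
proof -
  define lam where "lam = 2 / (- bf H x x)"
  define F where "F = (\<lambda>w. bf H w w + lam * (bf H w x)\<^sup>2)"
  have lam: "lam > 0"
    using neg by (simp add: lam_def)
  have F_pos: "F w > 0" if "w \<noteq> 0" for w
    using lorentzian_add_square_pos[OF L neg that] by (simp add: F_def lam_def)
  have cont: "continuous_on UNIV F"
    unfolding F_def
    by (intro continuous_intros continuous_on_bf)
  have "axis undefined 1 \<in> sphere (0::real^'m) 1"
    by simp
  then have "sphere (0::real^'m) 1 \<noteq> {}"
    by blast
  then obtain u where u: "u \<in> sphere 0 1" "\<And>y. y \<in> sphere 0 1 \<Longrightarrow> F u \<le> F y"
    using continuous_attains_inf[OF compact_sphere _ continuous_on_subset[OF cont subset_UNIV]]
    by blast
  define c where "c = F u"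
  have "u \<noteq> 0"
    using u(1) by auto
  then have c: "c > 0"
    using F_pos by (simp add: c_def)
  have F_scale: "F (t *\<^sub>R w) = t\<^sup>2 * F w" for t w
    by (simp add: F_def bf_scale_left bf_scale_right power2_eq_square algebra_simps)
  have "c * (norm w)\<^sup>2 \<le> F w" for w
  proof (cases "w = 0")
    case False
    define y where "y = (1 / norm w) *\<^sub>R w"
    have "c \<le> F y"
      using False u(2)[of y] by (simp add: c_def y_def)
    moreover have "F w = (norm w)\<^sup>2 * F y"
      using F_scale[of "norm w" y] False by (simp add: y_def)
    ultimately show ?thesis
      by (simp add: mult.commute mult_right_mono)
  qed (simp add: F_def)
  then have "(norm w)\<^sup>2 \<le> lam / c * (bf H w x)\<^sup>2 + 1 / c * bf H w w" for w
    using c by (simp add: F_def pos_le_divide_eq field_simps)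
  moreover have "lam / c \<ge> 0" "1 / c > 0"
    using lam c by auto
  ultimately show ?thesis
    using that by blast
qed

lemma finite_latt_cball: "finite {w::real^'m. w \<in> latt \<and> norm w \<le> R}"
proof -
  define S where "S = {w::real^'m. w \<in> latt \<and> norm w \<le> R}"
  define f where "f = (\<lambda>w::real^'m. \<lambda>i. \<lfloor>w $ i\<rfloor>)"
  have "f ` S \<subseteq> PiE UNIV (\<lambda>_. {-\<lceil>R\<rceil>..\<lceil>R\<rceil>})"
  proof
    fix g assume "g \<in> f ` S"
    then obtain w where w: "w \<in> S" "g = f w"
      by blast
    have "\<bar>w $ i\<bar> \<le> R" for i
      using w(1) component_le_norm_cart[of w i] by (simp add: S_def)
    then have "- \<lceil>R\<rceil> \<le> \<lfloor>w $ i\<rfloor> \<and> \<lfloor>w $ i\<rfloor> \<le> \<lceil>R\<rceil>" for i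
    proof -
      have "\<lfloor>- R\<rfloor> \<le> \<lfloor>w $ i\<rfloor>" "\<lfloor>w $ i\<rfloor> \<le> \<lfloor>R\<rfloor>"
        using \<open>\<bar>w $ i\<bar> \<le> R\<close> by (auto intro: floor_mono)
      then show ?thesis
        unfolding floor_minus using floor_le_ceiling[of R] by linarith
    qed
    then show "g \<in> PiE UNIV (\<lambda>_. {-\<lceil>R\<rceil>..\<lceil>R\<rceil>})"
      using w by (simp add: f_def PiE_iff)
  qed
  then have "finite (f ` S)"
    by (rule finite_subset) (simp add: finite_PiE)
  moreover have "inj_on f S"
  proof
    fix x y assume "x \<in> S" "y \<in> S" "f x = f y"
    then have "\<lfloor>x $ i\<rfloor> = \<lfloor>y $ i\<rfloor>" "x $ i \<in> \<int>" "y $ i \<in> \<int>" for i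
      by (auto simp: f_def S_def latt_def fun_eq_iff)
    then show "x = y"
      by (metis Ints_cases floor_of_int vec_eq_iff)
  qed
  ultimately show ?thesis
    using finite_imageD S_def by blast
qed

lemma roots_near_negative_bounded:
  fixes H :: "real^'m^'m"
  assumes L: "lorentzian H" and neg: "bf H x x < 0"
  obtains r R where "r > 0"
    "\<And>w y. w \<in> V H 2 \<union> V H 6 \<Longrightarrow> y \<in> ball x r \<Longrightarrow> bf H w y = 0 \<Longrightarrow> norm w \<le> R"
proof -
  obtain A B where AB: "A \<ge> 0" "B > 0" "\<And>w. (norm w)\<^sup>2 \<le> A * (bf H w x)\<^sup>2 + B * bf H w w"
    using lorentzian_norm_bound[OF L neg] by blast
  obtain K where K: "K > 0" "\<And>x y. \<bar>bf H x y\<bar> \<le> norm x * norm y * K"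
    using bf_bounded by blast
  define r where "r = 1 / (K * (A + 1))"
  have r: "r > 0" "A * (r * K)\<^sup>2 \<le> 1 / 2"
  proof -
    have "A * (r * K)\<^sup>2 = A / (A + 1)\<^sup>2"
      using K by (simp add: r_def power2_eq_square)
    also have "\<dots> \<le> 1 / 2"
    proof -
      have "2 * A \<le> (A + 1)\<^sup>2"
        by (simp add: power2_eq_square algebra_simps)
      then show ?thesis
        using AB(1) by (simp add: field_simps)
    qed
    finally show "A * (r * K)\<^sup>2 \<le> 1 / 2" .
  qed (use K AB in \<open>simp add: r_def\<close>)
  have "norm w \<le> sqrt (12 * B)"
    if w: "w \<in> V H 2 \<union> V H 6" and y: "y \<in> ball x r" and orth: "bf H w y = 0" for w y
  proof -
    have "bf H w w \<le> 6"
      using w by (auto simp: V_def)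
    have "\<bar>bf H w x\<bar> = \<bar>bf H w (x - y)\<bar>"
      by (simp add: bf_diff_right orth)
    also have "\<dots> \<le> norm w * norm (x - y) * K"
      by (rule K(2))
    also have "\<dots> \<le> norm w * (r * K)"
      using y K(1) by (simp add: dist_norm mult.assoc mult_left_mono)
    finally have "\<bar>bf H w x\<bar>\<^sup>2 \<le> (norm w * (r * K))\<^sup>2"
      by (intro power_mono) auto
    then have "A * (bf H w x)\<^sup>2 \<le> A * ((norm w)\<^sup>2 * (r * K)\<^sup>2)"
      using AB(1) by (simp add: power_mult_distrib mult_left_mono)
    also have "\<dots> = (norm w)\<^sup>2 * (A * (r * K)\<^sup>2)"
      by (simp add: algebra_simps)
    also have "\<dots> \<le> (norm w)\<^sup>2 * (1 / 2)"
      using r(2) by (intro mult_left_mono) auto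
    finally have "(norm w)\<^sup>2 \<le> 12 * B"
      using AB(3)[of w] mult_left_mono[OF \<open>bf H w w \<le> 6\<close>, of B] AB(2) by linarith
    then show ?thesis
      by (rule real_le_rsqrt)
  qed
  then show ?thesis
    using that r(1) by blast
qed

lemma mirrors_locally_finite:
  fixes H :: "real^'m^'m"
  assumes L: "lorentzian H" and neg: "bf H x x < 0"
  obtains r where "r > 0" "ball x r \<subseteq> negcone H"
    "\<And>w y. w \<in> V H 2 \<union> V H 6 \<Longrightarrow> y \<in> ball x r \<Longrightarrow> bf H w y = 0 \<Longrightarrow> bf H w x = 0"
proof -
  obtain r1 R where r1: "r1 > 0"
    and bounded: "\<And>w y. w \<in> V H 2 \<union> V H 6 \<Longrightarrow> y \<in> ball x r1 \<Longrightarrow> bf H w y = 0 \<Longrightarrow> norm w \<le> R"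
    using roots_near_negative_bounded[OF L neg] by blast
  define F where "F = {w \<in> latt. norm w \<le> R \<and> bf H w x \<noteq> 0}"
  have "finite F"
    using finite_latt_cball[of R] by (rule rev_finite_subset) (auto simp: F_def)
  define Nbhd where "Nbhd = ball x r1 \<inter> negcone H \<inter> (\<Inter>w\<in>F. {y. bf H w y \<noteq> 0})"
  have "open (negcone H)"
    unfolding negcone_def
    by (rule open_Collect_less) (auto intro: continuous_on_bf)
  moreover have "open {y. bf H w y \<noteq> 0}" for w
    by (rule open_Collect_neq) (auto intro: continuous_on_bf)
  ultimately have "open Nbhd"
    using \<open>finite F\<close> unfolding Nbhd_def by (intro open_Int open_INT open_ball) auto
  moreover have "x \<in> Nbhd"
    using r1 neg by (simp add: Nbhd_def F_def negcone_def)
  ultimately obtain r where r: "r > 0" "ball x r \<subseteq> Nbhd"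
    using open_contains_ball_eq by blast
  show ?thesis
  proof (rule that[OF r(1)])
    show "ball x r \<subseteq> negcone H"
      using r(2) by (auto simp: Nbhd_def)
    fix w y assume w: "w \<in> V H 2 \<union> V H 6" and y: "y \<in> ball x r" and orth: "bf H w y = 0"
    have "y \<in> Nbhd"
      using y r(2) by blast
    moreover from this have "norm w \<le> R"
      using bounded[OF w _ orth] by (simp add: Nbhd_def)
    moreover have "w \<in> latt"
      using w by (auto simp: V_def)
    ultimately show "bf H w x = 0"
      using orth by (auto simp: Nbhd_def F_def)
  qed
qed

section \<open>Chambers and cells\<close>

definition off_mirrors :: "real^'m^'m \<Rightarrow> (real^'m) set" where
  "off_mirrors H = negcone H - mirrors H"

lemma aut_V:
  assumes M: "aut G M" and w: "w \<in> V G k"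
  shows "M *v w \<in> V G k"
proof -
  have "2 * bf G (M *v w) x / k \<in> \<int>" if "x \<in> latt" for x
    using aut_latt_obtain[OF M that] w aut_bf[OF M] by (auto simp: V_def)
  then show ?thesis
    using w aut_latt[OF M] aut_bf[OF M] by (simp add: V_def)
qed

lemma aut_mirrors_imp:
  assumes M: "aut G M" and x: "x \<in> mirrors G"
  shows "M *v x \<in> mirrors G"
proof -
  obtain w where "w \<in> V G 2 \<union> V G 6" "bf G w x = 0"
    using x unfolding mirrors_def by blast
  then have "M *v w \<in> V G 2 \<union> V G 6" "bf G (M *v w) (M *v x) = 0"
    using aut_V[OF M] aut_bf[OF M] by auto
  then show ?thesis
    unfolding mirrors_def by blast
qed

lemma aut_mirrors_iff:
  assumes M: "aut G M"
  shows "M *v x \<in> mirrors G \<longleftrightarrow> x \<in> mirrors G"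
proof -
  obtain N where "aut G N" "\<And>x. N *v (M *v x) = x"
    using aut_inverse[OF M] by blast
  then show ?thesis
    using aut_mirrors_imp[OF M, of x] aut_mirrors_imp[of G N "M *v x"] by auto
qed

lemma aut_negcone_iff: "aut G M \<Longrightarrow> M *v x \<in> negcone G \<longleftrightarrow> x \<in> negcone G"
  by (simp add: negcone_def aut_bf)

lemma aut_off_mirrors_iff: "aut G M \<Longrightarrow> M *v x \<in> off_mirrors G \<longleftrightarrow> x \<in> off_mirrors G"
  by (simp add: off_mirrors_def aut_mirrors_iff aut_negcone_iff)

lemma aut_image_negcone:
  assumes M: "aut G M"
  shows "(\<lambda>x. M *v x) ` negcone G = negcone G"
proof
  show "(\<lambda>x. M *v x) ` negcone G \<subseteq> negcone G"
    by (auto simp: aut_negcone_iff[OF M])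
  obtain N where N: "\<And>x. M *v (N *v x) = x"
    using aut_inverse[OF M] by blast
  show "negcone G \<subseteq> (\<lambda>x. M *v x) ` negcone G"
  proof
    fix x assume "x \<in> negcone G"
    then have "N *v x \<in> negcone G"
      using aut_negcone_iff[OF M, of "N *v x"] by (simp add: N)
    then show "x \<in> (\<lambda>x. M *v x) ` negcone G"
      using N[of x] by (metis image_eqI)
  qed
qed

lemma off_mirrors_subset_negcone: "off_mirrors H \<subseteq> negcone H"
  by (auto simp: off_mirrors_def)

lemma open_off_mirrors:
  assumes L: "lorentzian H"
  shows "open (off_mirrors H)"
  unfolding open_contains_ball
proof
  fix x assume x: "x \<in> off_mirrors H"
  then obtain r where r: "r > 0" "ball x r \<subseteq> negcone H"
    "\<And>w y. w \<in> V H 2 \<union> V H 6 \<Longrightarrow> y \<in> ball x r \<Longrightarrow> bf H w y = 0 \<Longrightarrow> bf H w x = 0"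
    using mirrors_locally_finite[OF L] by (auto simp: off_mirrors_def negcone_def)
  have "ball x r \<subseteq> off_mirrors H"
    using r(2,3) x by (fastforce simp: off_mirrors_def mirrors_def)
  then show "\<exists>e>0. ball x e \<subseteq> off_mirrors H"
    using r(1) by blast
qed

lemma connected_component_image_subset:
  assumes "continuous_on UNIV f" "f ` U \<subseteq> U"
  shows "f ` connected_component_set U p \<subseteq> connected_component_set U (f p)"
proof (cases "p \<in> U")
  case True
  show ?thesis
  proof (rule connected_component_maximal)
    show "f p \<in> f ` connected_component_set U p"
      using True by simp
    show "connected (f ` connected_component_set U p)"
      using assms(1) continuous_on_subset connected_connected_component connected_continuous_image
      by blast
    show "f ` connected_component_set U p \<subseteq> U"
      using assms(2) connected_component_subset by blast
  qed
qed (metis connected_component_eq_empty empty_subsetI image_empty)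

lemma aut_image_component:
  assumes M: "aut H M" and K: "K \<in> components (off_mirrors H)"
  shows "(\<lambda>x. M *v x) ` K \<in> components (off_mirrors H)"
proof -
  let ?U = "off_mirrors H"
  obtain N where N: "aut H N" "\<And>x. M *v (N *v x) = x" "\<And>x. N *v (M *v x) = x"
    using aut_inverse[OF M] by blast
  obtain p where p: "p \<in> ?U" "K = connected_component_set ?U p"
    using K components_iff by blast
  have cont: "continuous_on UNIV (\<lambda>x. A *v x)" for A :: "real^'a^'a"
    by (simp add: linear_continuous_on)
  have "(\<lambda>x. M *v x) ` K \<subseteq> connected_component_set ?U (M *v p)"
    unfolding p(2) using aut_off_mirrors_iff[OF M]
    by (intro connected_component_image_subset[OF cont]) auto
  moreover have "(\<lambda>x. N *v x) ` connected_component_set ?U (M *v p) \<subseteq> K"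
    using connected_component_image_subset[OF cont, of N ?U "M *v p"] aut_off_mirrors_iff[OF N(1)]
    by (auto simp: p(2) N(3))
  then have "connected_component_set ?U (M *v p) \<subseteq> (\<lambda>x. M *v x) ` K"
    by (metis N(2) image_eqI image_subset_iff subsetI)
  ultimately have "(\<lambda>x. M *v x) ` K = connected_component_set ?U (M *v p)"
    by (rule subset_antisym)
  then show ?thesis
    using p(1) aut_off_mirrors_iff[OF M] by (simp add: componentsI)
qed

lemma uminus_image_component:
  "K \<in> components (off_mirrors H) \<Longrightarrow> uminus ` K \<in> components (off_mirrors H)"
  unfolding uminus_image_eq_minus_one by (rule aut_image_component[OF aut_minus_one])

lemma aut_image_closure_negcone:
  assumes M: "aut H M"
  shows "(\<lambda>x. M *v x) ` (closure K \<inter> negcone H) = closure ((\<lambda>x. M *v x) ` K) \<inter> negcone H"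
proof -
  obtain N where "\<And>x. N *v (M *v x) = x"
    using aut_inverse[OF M] by blast
  then have inj: "inj (\<lambda>x. M *v x)"
    by (metis injI)
  have "(\<lambda>x. M *v x) ` (closure K \<inter> negcone H) =
      (\<lambda>x. M *v x) ` closure K \<inter> (\<lambda>x. M *v x) ` negcone H"
    by (rule image_Int[OF inj])
  then show ?thesis
    by (simp only: closure_injective_linear_image[OF matrix_vector_mul_linear inj] aut_image_negcone[OF M])
qed

lemma uminus_image_closure_negcone:
  "uminus ` (closure K \<inter> negcone H) = closure (uminus ` K) \<inter> negcone H"
  unfolding uminus_image_eq_minus_one by (rule aut_image_closure_negcone[OF aut_minus_one])

lemma component_eq_if_mem_closure:
  fixes U :: "'a::euclidean_space set"
  assumes "open U" "K1 \<in> components U" "K2 \<in> components U" "x \<in> K2" "x \<in> closure K1"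
  shows "K2 = K1"
proof -
  have "K2 \<inter> closure K1 \<noteq> {}"
    using assms(4,5) by blast
  then have "K2 \<inter> K1 \<noteq> {}"
    using open_Int_closure_eq_empty[OF open_components[OF assms(1,3)]] by blast
  then show ?thesis
    using components_eq[OF assms(3,2)] by blast
qed

lemma aut_image_half_cell:
  assumes M: "aut H M" and Q: "half_cell H Q"
  shows "half_cell H ((\<lambda>x. M *v x) ` Q)"
proof -
  obtain K where "K \<in> components (off_mirrors H)" "Q = closure K \<inter> negcone H"
    using Q by (auto simp: half_cell_def off_mirrors_def)
  then show ?thesis
    using aut_image_component[OF M] aut_image_closure_negcone[OF M]
    unfolding half_cell_def off_mirrors_def by blast
qed

lemma aut_image_cell_lift:
  assumes M: "aut H M" and lift: "cell_lift H P Q"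
  shows "cell_lift H ((\<lambda>x. M *v x) ` P) ((\<lambda>x. M *v x) ` Q)"
proof -
  have "(\<lambda>x. M *v x) ` (uminus ` Q) = uminus ` (\<lambda>x. M *v x) ` Q"
    by (simp add: image_image mult_uminus)
  then show ?thesis
    using lift aut_image_half_cell[OF M] by (auto simp: cell_lift_def image_Un)
qed

lemma uminus_uminus_image [simp]: "uminus ` uminus ` A = (A :: 'a::group_add set)"
  by (simp add: image_image)

lemma cell_lift_cases:
  assumes L: "lorentzian H" and lift: "cell_lift H P Q" and lift': "cell_lift H P Q'"
  shows "Q' = Q \<or> Q' = uminus ` Q"
proof -
  obtain K where K: "K \<in> components (off_mirrors H)" "Q = closure K \<inter> negcone H"
    and P: "P = Q \<union> uminus ` Q"
    using lift by (auto simp: cell_lift_def half_cell_def off_mirrors_def)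
  obtain K' where K': "K' \<in> components (off_mirrors H)" "Q' = closure K' \<inter> negcone H"
    and P': "P = Q' \<union> uminus ` Q'"
    using lift' by (auto simp: cell_lift_def half_cell_def off_mirrors_def)
  obtain k where k: "k \<in> K'"
    using K'(1) in_components_nonempty by blast
  then have "k \<in> Q'"
    using K' in_components_subset closure_subset off_mirrors_subset_negcone by blast
  then have "k \<in> closure K \<or> k \<in> closure (uminus ` K)"
    using P P' K(2) uminus_image_closure_negcone[of K H] by auto
  then have "K' = K \<or> K' = uminus ` K"
    using component_eq_if_mem_closure[OF open_off_mirrors[OF L] _ K'(1) k]
      K(1) uminus_image_component[OF K(1)] by blast
  then show ?thesis
    using K(2) K'(2) uminus_image_closure_negcone[of K H] by auto
qed

text \<open>A chamber lies on the negative side of \<open>x \<mapsto> bf H x k\<close> for any of its points \<open>k\<close>,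
  since this function does not vanish on the negative cone.\<close>
lemma half_cell_uminus_neq:
  assumes L: "lorentzian H" and Q: "half_cell H Q"
  shows "uminus ` Q \<noteq> Q"
proof
  assume eq: "uminus ` Q = Q"
  obtain K where K: "K \<in> components (off_mirrors H)" "Q = closure K \<inter> negcone H"
    using Q by (auto simp: half_cell_def off_mirrors_def)
  obtain k where k: "k \<in> K"
    using K(1) in_components_nonempty by blast
  then have k_neg: "k \<in> negcone H"
    using K(1) in_components_subset off_mirrors_subset_negcone by blast
  then have kk: "bf H k k < 0"
    by (simp add: negcone_def)
  define a where "a = H *v k"
  have a: "a \<bullet> x = bf H x k" for x
    by (simp add: a_def bf_def inner_commute)
  have "bf H x k < 0" if x: "x \<in> K" for x
  proof (rule ccontr)
    assume "\<not> bf H x k < 0"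
    then obtain z where z: "z \<in> K" "a \<bullet> z = 0"
      using connected_ivt_hyperplane[OF in_components_connected[OF K(1)] k x, of a 0] k_neg
      by (auto simp: a negcone_def)
    then have "bf H z z < 0"
      using K(1) in_components_subset off_mirrors_subset_negcone by (fastforce simp: negcone_def)
    moreover from this have "z \<noteq> 0"
      by auto
    ultimately show False
      using lorentzianD[OF L kk] z(2) by (fastforce simp: a)
  qed
  then have "closure K \<subseteq> {x. a \<bullet> x \<le> 0}"
    by (intro closure_minimal closed_halfspace_le) (auto simp: a intro: less_imp_le)
  moreover have "k \<in> Q"
    using K(2) k k_neg closure_subset by blast
  then have "- k \<in> closure K"
    using eq K(2) by blast
  ultimately show False
    using k_neg by (auto simp: a bf_minus_left negcone_def)
qed

lemma aut_image_cell_lift_cases: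
  assumes "lorentzian H" "aut H M" "preserves M P" "cell_lift H P Q"
  shows "(\<lambda>x. M *v x) ` Q = Q \<or> (\<lambda>x. M *v x) ` Q = uminus ` Q"
proof -
  have "cell_lift H P ((\<lambda>x. M *v x) ` Q)"
    using aut_image_cell_lift[OF assms(2,4)] assms(3) by (simp add: preserves_def)
  then show ?thesis
    using cell_lift_cases[OF assms(1,4)] by blast
qed

lemma cell_direct_iff:
  assumes L: "lorentzian H" and M: "aut H M" and "preserves M P" and lift: "cell_lift H P Q"
  shows "cell_direct H M P \<longleftrightarrow> (\<lambda>x. M *v x) ` Q = Q"
proof
  assume "cell_direct H M P"
  then obtain Q' where lift': "cell_lift H P Q'" and inv: "(\<lambda>x. M *v x) ` Q' = Q'"
    unfolding cell_direct_def by blast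
  consider "Q' = Q" | "Q' = uminus ` Q"
    using cell_lift_cases[OF L lift lift'] by blast
  then show "(\<lambda>x. M *v x) ` Q = Q"
  proof cases
    case 2
    have "(\<lambda>x. M *v x) ` Q = uminus ` (\<lambda>x. M *v x) ` uminus ` Q"
      by (simp add: image_image mult_uminus)
    also have "\<dots> = Q"
      using inv 2 by (simp add: image_image)
    finally show ?thesis .
  qed (use inv in simp)
qed (use lift in \<open>auto simp: cell_direct_def\<close>)

lemma preserves_uminus:
  assumes "cell H P" "preserves M P"
  shows "preserves (- M) P"
proof -
  obtain Q where "P = Q \<union> uminus ` Q"
    using assms(1) by (auto simp: cell_def cell_lift_def)
  then have "uminus ` P = P"
    by (auto simp: image_Un image_image)
  moreover have "(\<lambda>x. (- M) *v x) ` P = uminus ` (\<lambda>x. M *v x) ` P"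
    by (simp add: image_image matrix_uminus_mult)
  ultimately show ?thesis
    using assms(2) by (simp add: preserves_def)
qed

lemma cell_direct_uminus_iff:
  assumes L: "lorentzian H" and M: "aut H M" and P: "cell H P" "preserves M P"
  shows "cell_direct H (- M) P \<longleftrightarrow> \<not> cell_direct H M P"
proof -
  obtain Q where lift: "cell_lift H P Q"
    using P(1) by (auto simp: cell_def)
  have "uminus ` Q \<noteq> Q"
    using half_cell_uminus_neq[OF L] lift by (auto simp: cell_lift_def)
  moreover have "(\<lambda>x. (- M) *v x) ` Q = uminus ` (\<lambda>x. M *v x) ` Q"
    by (simp add: image_image matrix_uminus_mult)
  moreover have "uminus ` (\<lambda>x. M *v x) ` Q = Q \<longleftrightarrow> (\<lambda>x. M *v x) ` Q = uminus ` Q"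
    by (metis uminus_uminus_image)
  ultimately show ?thesis
    using cell_direct_iff[OF L M P(2) lift] cell_direct_iff[OF L aut_uminus[OF M] preserves_uminus[OF P] lift]
      aut_image_cell_lift_cases[OF L M P(2) lift]
    by argo
qed

lemma aut_fixes_component:
  assumes L: "lorentzian H" and M: "aut H M" and K: "K \<in> components (off_mirrors H)"
    and inv: "(\<lambda>x. M *v x) ` (closure K \<inter> negcone H) = closure K \<inter> negcone H"
  shows "(\<lambda>x. M *v x) ` K = K"
proof -
  have MK: "(\<lambda>x. M *v x) ` K \<in> components (off_mirrors H)"
    using aut_image_component[OF M K] .
  obtain p where p: "p \<in> (\<lambda>x. M *v x) ` K"
    using in_components_nonempty[OF MK] by (meson ex_in_conv)
  then have "p \<in> off_mirrors H"
    using in_components_subset[OF MK] by blast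
  then have "p \<in> closure ((\<lambda>x. M *v x) ` K) \<inter> negcone H"
    using p closure_subset off_mirrors_subset_negcone by blast
  then have "p \<in> closure K"
    using inv aut_image_closure_negcone[OF M, of K] by auto
  then show ?thesis
    by (rule component_eq_if_mem_closure[OF open_off_mirrors[OF L] K MK p])
qed

lemma cell_of_invariant_component:
  assumes M: "aut H M" and K: "K \<in> components (off_mirrors H)" and inv: "(\<lambda>x. M *v x) ` K = K"
  shows "\<exists>P. cell H P \<and> preserves M P \<and> cell_direct H M P"
proof -
  define Q where "Q = closure K \<inter> negcone H"
  have lift: "cell_lift H (Q \<union> uminus ` Q) Q"
    using K by (auto simp: cell_lift_def half_cell_def off_mirrors_def Q_def)
  moreover have MQ: "(\<lambda>x. M *v x) ` Q = Q"
    using aut_image_closure_negcone[OF M, of K] inv by (simp add: Q_def)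
  moreover have "preserves M (Q \<union> uminus ` Q)"
    using aut_image_cell_lift[OF M lift] MQ by (auto simp: preserves_def cell_lift_def)
  ultimately show ?thesis
    unfolding cell_def cell_direct_def by blast
qed

section \<open>The 3-primary part of the discriminant group\<close>

lemma aut_latt_iff: "aut G M \<Longrightarrow> M *v x \<in> latt \<longleftrightarrow> x \<in> latt"
  by (metis aut_inverse aut_latt)

lemma disc3_scale:
  assumes x: "x \<in> disc3 G" and c: "c \<in> \<int>"
  shows "c *\<^sub>R x \<in> disc3 G"
proof -
  have "3 *\<^sub>R (c *\<^sub>R x) \<in> latt"
    using latt_scale[OF c, of "3 *\<^sub>R x"] x by (simp add: disc3_def mult.commute)
  moreover have "bf G (c *\<^sub>R x) y \<in> \<int>" if "y \<in> latt" for y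
    using x c that by (auto simp: disc3_def dual_def bf_scale_left)
  ultimately show ?thesis
    using x by (simp add: disc3_def dual_def)
qed

lemma aut_disc3:
  assumes M: "aut G M" and x: "x \<in> disc3 G"
  shows "M *v x \<in> disc3 G"
proof -
  have "bf G (M *v x) y \<in> \<int>" if "y \<in> latt" for y
    using aut_latt_obtain[OF M that] x aut_bf[OF M] by (auto simp: disc3_def dual_def)
  moreover have "3 *\<^sub>R (M *v x) \<in> latt"
    using aut_latt[OF M, of "3 *\<^sub>R x"] x by (simp add: disc3_def matrix_vector_mult_scaleR)
  ultimately show ?thesis
    by (simp add: disc3_def dual_def)
qed

lemma equiv_latt_cong: "equiv D (latt_cong D)"
proof (rule equivI)
  show "latt_cong D \<subseteq> D \<times> D" "refl_on D (latt_cong D)"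
    by (auto simp: refl_on_def latt_cong_def)
  show "sym (latt_cong D)"
  proof (rule symI)
    fix x y assume "(x, y) \<in> latt_cong D"
    then show "(y, x) \<in> latt_cong D"
      using latt_uminus_iff[of "x - y"] by (simp add: latt_cong_def)
  qed
  show "trans (latt_cong D)"
  proof (rule transI)
    fix x y z assume "(x, y) \<in> latt_cong D" "(y, z) \<in> latt_cong D"
    then show "(x, z) \<in> latt_cong D"
      using latt_add[of "x - y" "y - z"] by (simp add: latt_cong_def)
  qed
qed

lemma disc3_twice_latt: "x \<in> disc3 G \<Longrightarrow> 2 *\<^sub>R x \<in> latt \<Longrightarrow> x \<in> latt"
  using latt_diff[of "3 *\<^sub>R x" "2 *\<^sub>R x"] by (simp add: disc3_def vec_eq_iff flip: scaleR_diff_left)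

lemma disc3_cases:
  assumes card: "card (disc3 G // latt_cong (disc3 G)) = 3"
    and x: "x \<in> disc3 G" "x \<notin> latt" and y: "y \<in> disc3 G"
  shows "y \<in> latt \<or> y - x \<in> latt \<or> y - 2 *\<^sub>R x \<in> latt"
proof -
  let ?R = "latt_cong (disc3 G)"
  have cls_eq: "?R `` {a} = ?R `` {b} \<longleftrightarrow> a - b \<in> latt" if "a \<in> disc3 G" "b \<in> disc3 G" for a b
    using eq_equiv_class_iff[OF equiv_latt_cong that] that by (simp add: latt_cong_def)
  have in_disc3: "0 \<in> disc3 G" "2 *\<^sub>R x \<in> disc3 G"
    using disc3_scale[OF x(1), of 0] disc3_scale[OF x(1), of 2] by auto
  have "2 *\<^sub>R x \<notin> latt"
    using x by (metis disc3_twice_latt)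
  moreover have "x - 2 *\<^sub>R x = - x"
    by (simp add: vec_eq_iff)
  ultimately have "?R `` {0} \<noteq> ?R `` {x}" "?R `` {0} \<noteq> ?R `` {2 *\<^sub>R x}"
    "?R `` {x} \<noteq> ?R `` {2 *\<^sub>R x}"
    using cls_eq x in_disc3 by (simp_all only:) simp_all
  then have "card {?R `` {0}, ?R `` {x}, ?R `` {2 *\<^sub>R x}} = 3"
    by simp
  moreover have "{?R `` {0}, ?R `` {x}, ?R `` {2 *\<^sub>R x}} \<subseteq> disc3 G // ?R"
    using x(1) in_disc3 by (auto intro: quotientI)
  moreover have "finite (disc3 G // ?R)"
    using card by (intro card_ge_0_finite) simp
  ultimately have "{?R `` {0}, ?R `` {x}, ?R `` {2 *\<^sub>R x}} = disc3 G // ?R"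
    using card by (intro card_subset_eq) auto
  moreover have "?R `` {y} \<in> disc3 G // ?R"
    using y by (rule quotientI)
  ultimately have "?R `` {y} \<in> {?R `` {0}, ?R `` {x}, ?R `` {2 *\<^sub>R x}}"
    by metis
  then have "?R `` {y} = ?R `` {0} \<or> ?R `` {y} = ?R `` {x} \<or> ?R `` {y} = ?R `` {2 *\<^sub>R x}"
    by (simp only: insert_iff empty_iff simp_thms)
  moreover have "?R `` {y} = ?R `` {0} \<Longrightarrow> y \<in> latt"
    "?R `` {y} = ?R `` {x} \<Longrightarrow> y - x \<in> latt"
    "?R `` {y} = ?R `` {2 *\<^sub>R x} \<Longrightarrow> y - 2 *\<^sub>R x \<in> latt"
    using cls_eq[OF y] x(1) in_disc3 by simp_all
  ultimately show ?thesis
    by argo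
qed

lemma z3_direct_uminus:
  assumes card: "card (disc3 G // latt_cong (disc3 G)) = 3"
    and M: "aut G M" and reversing: "\<not> z3_direct G M"
  shows "z3_direct G (- M)"
proof -
  obtain x where x: "x \<in> disc3 G" "M *v x - x \<notin> latt"
    using reversing unfolding z3_direct_def by blast
  have "x \<notin> latt"
    using x(2) aut_latt[OF M] latt_diff by blast
  then have "M *v x \<notin> latt"
    using aut_latt_iff[OF M] by blast
  then have "M *v x - 2 *\<^sub>R x \<in> latt"
    using disc3_cases[OF card x(1) \<open>x \<notin> latt\<close> aut_disc3[OF M x(1)]] x(2) by blast
  moreover have "3 *\<^sub>R x \<in> latt"
    using x(1) by (simp add: disc3_def)
  moreover have "M *v x + x = (M *v x - 2 *\<^sub>R x) + 3 *\<^sub>R x"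
    by (simp add: vec_eq_iff)
  ultimately have Mx: "M *v x + x \<in> latt"
    by (metis latt_add)
  show ?thesis
    unfolding z3_direct_def
  proof
    fix y assume y: "y \<in> disc3 G"
    then obtain k where k: "k \<in> \<int>" "y - k *\<^sub>R x \<in> latt"
      using disc3_cases[OF card x(1) \<open>x \<notin> latt\<close>] by (metis Ints_0 Ints_1 Ints_numeral diff_zero scaleR_one scaleR_zero_left)
    have "(- M) *v y - y = - ((M *v (y - k *\<^sub>R x) + (y - k *\<^sub>R x)) + k *\<^sub>R (M *v x + x))"
      by (simp add: matrix_uminus_mult matrix_vector_mult_diff_distrib matrix_vector_mult_scaleR algebra_simps)
    moreover have "(M *v (y - k *\<^sub>R x) + (y - k *\<^sub>R x)) + k *\<^sub>R (M *v x + x) \<in> latt"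
      by (intro latt_add latt_scale aut_latt[OF M] k Mx)
    ultimately show "(- M) *v y - y \<in> latt"
      by (metis latt_uminus_iff)
  qed
qed

lemma not_z3_direct_uminus:
  assumes direct: "z3_direct G M" and x: "x \<in> disc3 G" "x \<notin> latt"
  shows "\<not> z3_direct G (- M)"
proof
  assume "z3_direct G (- M)"
  then have "(- M) *v x - x \<in> latt" "M *v x - x \<in> latt"
    using direct x(1) unfolding z3_direct_def by blast+
  then have "- ((- M) *v x - x) - (M *v x - x) \<in> latt"
    by (metis latt_diff latt_uminus_iff)
  moreover have "- ((- M) *v x - x) - (M *v x - x) = 2 *\<^sub>R x"
    by (simp add: matrix_uminus_mult vec_eq_iff)
  ultimately show False
    using x disc3_twice_latt by metis
qed

section \<open>The orthogonal sum \<open>L = L\<^sub>v \<oplus> \<int>v\<close>\<close>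

definition proj :: "real^('n::finite option) \<Rightarrow> real^'n" where
  "proj x = (\<chi> i. x $ Some i)"

definition vec_v :: "real^('n::finite option)" where
  "vec_v = (\<chi> j. case j of None \<Rightarrow> 1 | Some _ \<Rightarrow> 0)"

lemma proj_nth [simp]: "proj x $ i = x $ Some i"
  by (simp add: proj_def)

lemma emb_nth_Some [simp]: "emb x $ Some i = x $ i"
  by (simp add: emb_def)

lemma emb_nth_None [simp]: "emb x $ None = 0"
  by (simp add: emb_def)

lemma vec_v_nth_Some [simp]: "vec_v $ Some i = 0"
  by (simp add: vec_v_def)

lemma vec_v_nth_None [simp]: "vec_v $ None = 1"
  by (simp add: vec_v_def)

lemma proj_emb [simp]: "proj (emb x) = x"
  by (simp add: vec_eq_iff)

lemma proj_vec_v [simp]: "proj vec_v = 0"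
  by (simp add: vec_eq_iff)

lemma proj_add [simp]: "proj (x + y) = proj x + proj y"
  by (simp add: vec_eq_iff)

lemma proj_scaleR [simp]: "proj (c *\<^sub>R x) = c *\<^sub>R proj x"
  by (simp add: vec_eq_iff)

lemma emb_diff: "emb (x - y) = emb x - emb y"
  by (simp add: vec_eq_iff emb_def split: option.split)

lemma proj_zero [simp]: "proj 0 = 0"
  by (simp add: vec_eq_iff)

lemma emb_zero [simp]: "emb 0 = 0"
  unfolding vec_eq_iff
proof
  fix i :: "'a option"
  show "emb 0 $ i = 0 $ i"
    by (cases i) simp_all
qed

lemma emb_eq_0_iff [simp]: "emb x = 0 \<longleftrightarrow> x = 0"
  by (metis proj_emb proj_zero emb_zero)

lemma emb_proj_add_vec_v: "emb (proj x) + (x $ None) *\<^sub>R vec_v = x"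
  unfolding vec_eq_iff
proof
  fix i show "(emb (proj x) + (x $ None) *\<^sub>R vec_v) $ i = x $ i"
    by (cases i) simp_all
qed

lemma sum_option_UNIV: "(\<Sum>i\<in>(UNIV :: 'a::finite option set). f i) = f None + (\<Sum>i\<in>UNIV. f (Some i))"
  by (simp add: UNIV_option_conv sum.reindex)

lemma dist_emb [simp]: "dist (emb x) (emb y) = dist x y"
  by (simp add: dist_norm norm_vec_def L2_set_def sum_option_UNIV flip: emb_diff)

lemma bf_sum_gram: "bf (sum_gram G) x y = bf G (proj x) (proj y) + 2 * x $ None * y $ None"
proof -
  have "(sum_gram G *v y) $ None = 2 * y $ None"
    "(sum_gram G *v y) $ Some a = (G *v proj y) $ a" for a
    by (simp_all add: matrix_vector_mult_def sum_gram_def sum_option_UNIV)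
  then show ?thesis
    by (simp add: bf_def inner_vec_def sum_option_UNIV)
qed

lemma latt_sum_iff: "x \<in> latt \<longleftrightarrow> proj x \<in> latt \<and> x $ None \<in> \<int>"
proof
  assume "proj x \<in> latt \<and> x $ None \<in> \<int>"
  then have "x $ i \<in> \<int>" for i
    by (cases i) (simp_all add: latt_def)
  then show "x \<in> latt"
    by (simp add: latt_def)
qed (simp add: latt_def)

lemma emb_latt_iff [simp]: "emb x \<in> latt \<longleftrightarrow> x \<in> latt"
  by (simp add: latt_sum_iff)

lemma vec_v_latt: "vec_v \<in> latt"
  by (simp add: latt_sum_iff)

lemma lorentzian_sum_gram_imp:
  assumes L: "lorentzian (sum_gram G)"
  shows "lorentzian G"
  unfolding lorentzian_def
proof (intro conjI allI impI)
  have "G $ a $ b = G $ b $ a" for a b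
  proof -
    have "transpose (sum_gram G) $ Some a $ Some b = sum_gram G $ Some a $ Some b"
      using L by (simp add: lorentzian_def)
    then show ?thesis
      by (simp add: transpose_def sum_gram_def)
  qed
  then show "transpose G = G"
    by (simp add: vec_eq_iff transpose_def)
  fix x w
  assume "bf G x x < 0" "bf G w x = 0" "w \<noteq> 0"
  then show "bf G w w > 0"
    using lorentzianD[OF L, of "emb x" "emb w"] by (simp add: bf_sum_gram)
qed

definition sum_ext :: "real^'n^'n \<Rightarrow> real^('n::finite option)^('n option)" where
  "sum_ext Mv = (\<chi> i j. case (i, j) of (Some a, Some b) \<Rightarrow> Mv $ a $ b | (None, None) \<Rightarrow> 1 | _ \<Rightarrow> 0)"

lemma sum_ext_mult: "sum_ext Mv *v x = emb (Mv *v proj x) + (x $ None) *\<^sub>R vec_v"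
  unfolding vec_eq_iff
proof
  fix i show "(sum_ext Mv *v x) $ i = (emb (Mv *v proj x) + (x $ None) *\<^sub>R vec_v) $ i"
    by (cases i) (simp_all add: matrix_vector_mult_def sum_ext_def sum_option_UNIV)
qed

lemma sum_ext_emb [simp]: "sum_ext Mv *v emb x = emb (Mv *v x)"
  by (simp add: sum_ext_mult)

lemma sum_ext_vec_v [simp]: "sum_ext Mv *v vec_v = vec_v"
  by (simp add: sum_ext_mult vec_eq_iff)

lemma aut_sum_ext:
  assumes M: "aut G Mv"
  shows "aut (sum_gram G) (sum_ext Mv)"
proof -
  have "(\<lambda>x. sum_ext Mv *v x) ` latt \<subseteq> latt"
    using aut_latt[OF M] by (auto simp: sum_ext_mult latt_sum_iff)
  moreover have "latt \<subseteq> (\<lambda>x. sum_ext Mv *v x) ` latt"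
  proof
    fix y :: "real^('a option)" assume y: "y \<in> latt"
    then obtain z where z: "z \<in> latt" "proj y = Mv *v z"
      using aut_latt_obtain[OF M] by (auto simp: latt_sum_iff)
    have "sum_ext Mv *v (emb z + (y $ None) *\<^sub>R vec_v) = emb (proj y) + (y $ None) *\<^sub>R vec_v"
      by (simp add: sum_ext_mult z(2))
    also have "\<dots> = y"
      by (rule emb_proj_add_vec_v)
    finally have "sum_ext Mv *v (emb z + (y $ None) *\<^sub>R vec_v) = y" .
    moreover have "emb z + (y $ None) *\<^sub>R vec_v \<in> latt"
      using z(1) y by (simp add: latt_sum_iff)
    ultimately show "y \<in> (\<lambda>x. sum_ext Mv *v x) ` latt"
      by (metis image_eqI)
  qed
  moreover have "bf (sum_gram G) (sum_ext Mv *v x) (sum_ext Mv *v y) = bf (sum_gram G) x y" for x y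
    by (simp add: bf_sum_gram sum_ext_mult aut_bf[OF M])
  ultimately show ?thesis
    by (simp add: aut_def)
qed

lemma emb_disc3:
  assumes y: "y \<in> disc3 G"
  shows "emb y \<in> disc3 (sum_gram G)"
proof -
  have "bf (sum_gram G) (emb y) z \<in> \<int>" if "z \<in> latt" for z
    using y that by (auto simp: bf_sum_gram disc3_def dual_def latt_sum_iff)
  moreover have "3 *\<^sub>R emb y = emb (3 *\<^sub>R y)"
    by (simp add: vec_eq_iff emb_def split: option.split)
  ultimately show ?thesis
    using y by (simp add: disc3_def dual_def)
qed

lemma not_z3_direct_sum_ext:
  assumes "\<not> z3_direct G Mv"
  shows "\<not> z3_direct (sum_gram G) (sum_ext Mv)"
proof -
  obtain y where y: "y \<in> disc3 G" "Mv *v y - y \<notin> latt"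
    using assms unfolding z3_direct_def by blast
  then have "sum_ext Mv *v emb y - emb y \<notin> latt"
    by (simp flip: emb_diff)
  then show ?thesis
    using emb_disc3[OF y(1)] unfolding z3_direct_def by blast
qed

lemma quotient_latt_cong_subset: "D \<subseteq> latt \<Longrightarrow> D // latt_cong D \<subseteq> {D}"
  by (auto simp: quotient_def latt_cong_def intro: latt_diff)

lemma nonlatt_exists_if_three_classes:
  assumes "card (D // latt_cong D) = 3"
  obtains x where "x \<in> D" "x \<notin> latt"
proof -
  have "\<not> D \<subseteq> latt"
    using card_mono[OF _ quotient_latt_cong_subset, of D] assms by auto
  then show ?thesis
    using that by blast
qed

text \<open>Pairing with \<open>v\<close> and \<open>3x \<in> L\<close> make the \<open>v\<close>-coordinate of \<open>x \<in> disc3 (sum_gram G)\<close>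
  integral, so a non-lattice such \<open>x\<close> projects to a non-lattice element of \<open>disc3 G\<close>.\<close>
lemma disc3_nontrivial_of_sum_gram:
  assumes "card (disc3 (sum_gram G) // latt_cong (disc3 (sum_gram G))) = 3"
  obtains x where "x \<in> disc3 G" "x \<notin> latt"
proof -
  obtain x where x: "x \<in> disc3 (sum_gram G)" "x \<notin> latt"
    using nonlatt_exists_if_three_classes[OF assms] by blast
  then have dual: "x \<in> dual (sum_gram G)" and x3: "3 *\<^sub>R x \<in> latt"
    by (auto simp: disc3_def)
  have "bf (sum_gram G) x vec_v \<in> \<int>"
    using dual vec_v_latt unfolding dual_def by blast
  then have "2 * x $ None \<in> \<int>"
    by (simp add: bf_sum_gram)
  moreover have "3 * x $ None \<in> \<int>"
    using x3 by (simp add: latt_def)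
  ultimately have "3 * x $ None - 2 * x $ None \<in> \<int>"
    using Ints_diff by blast
  then have "x $ None \<in> \<int>"
    by simp
  have "bf G (proj x) y \<in> \<int>" if "y \<in> latt" for y
  proof -
    have "bf (sum_gram G) x (emb y) \<in> \<int>"
      using dual that by (simp add: dual_def)
    then show ?thesis
      by (simp add: bf_sum_gram)
  qed
  moreover have "3 *\<^sub>R proj x \<in> latt"
    using x3 by (simp add: latt_sum_iff flip: proj_scaleR)
  moreover have "proj x \<notin> latt"
    using x(2) \<open>x $ None \<in> \<int>\<close> by (simp add: latt_sum_iff)
  ultimately have "proj x \<in> disc3 G"
    by (simp add: disc3_def dual_def)
  then show ?thesis
    using that \<open>proj x \<notin> latt\<close> by blast
qed

section \<open>Chambers of \<open>L\<close> along a chamber of \<open>L\<^sub>v\<close>\<close>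

lemma Ints_nonzero_square_ge1: "(c::real) \<in> \<int> \<Longrightarrow> c \<noteq> 0 \<Longrightarrow> 1 \<le> c * c"
  using Ints_nonzero_abs_ge1 mult_mono[of 1 "\<bar>c\<bar>" 1 "\<bar>c\<bar>"] by fastforce

text \<open>Writing \<open>w = u + c v\<close>, orthogonality to \<open>y\<close> makes \<open>u\<^sup>2 > 0\<close> unless \<open>u = 0\<close>; then
  \<open>u\<^sup>2 = k - 2c\<^sup>2\<close> forces \<open>c = 0\<close> (for \<open>k = 6\<close> since \<open>2 (w \<cdot> v) / 6 = 2c / 3 \<in> \<int>\<close> gives \<open>3 dvd c\<close>),
  and \<open>u\<close> would be a root of \<open>L\<^sub>v\<close> orthogonal to \<open>y\<close>.\<close>
lemma root_orthogonal_emb_in_Zv: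
  assumes L: "lorentzian G" and y: "y \<in> off_mirrors G"
    and w: "w \<in> V (sum_gram G) 2 \<union> V (sum_gram G) 6" and orth: "bf (sum_gram G) w (emb y) = 0"
  shows "proj w = 0"
proof (rule ccontr)
  let ?S = "sum_gram G"
  define u where "u = proj w"
  define c where "c = w $ None"
  assume "proj w \<noteq> 0"
  have y_neg: "bf G y y < 0" and y_off: "y \<notin> mirrors G"
    using y by (auto simp: off_mirrors_def negcone_def)
  obtain k where k: "k = 2 \<or> k = 6" "w \<in> latt" "bf ?S w w = k"
    "\<forall>z\<in>latt. 2 * bf ?S w z / k \<in> \<int>"
    using w unfolding V_def by blast
  have uy: "bf G u y = 0"
    using orth by (simp add: bf_sum_gram u_def)
  then have u_pos: "bf G u u > 0"
    using lorentzianD[OF L y_neg] \<open>proj w \<noteq> 0\<close> by (simp add: u_def)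
  have ww: "bf G u u + 2 * c * c = k"
    using k(3) by (simp add: bf_sum_gram u_def c_def)
  have c_int: "c \<in> \<int>"
    using k(2) by (simp add: c_def latt_sum_iff)
  show False
  proof (cases "c = 0")
    case True
    have "u \<in> latt"
      using k(2) by (simp add: u_def latt_sum_iff)
    moreover have "2 * bf G u z / k \<in> \<int>" if "z \<in> latt" for z
      using k(4)[rule_format, of "emb z"] that by (simp add: bf_sum_gram u_def)
    ultimately have "u \<in> V G 2 \<union> V G 6"
      using k(1) ww True by (auto simp: V_def)
    then show False
      using uy y_off unfolding mirrors_def by blast
  next
    case False
    then have "1 \<le> c * c"
      using c_int by (rule Ints_nonzero_square_ge1[rotated])
    show False
    proof (cases "k = 2")
      case True
      then show False
        using ww u_pos \<open>1 \<le> c * c\<close> by linarith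
    next
      case False
      then have k6: "k = 6"
        using k(1) by simp
      have "2 * bf ?S w vec_v / k \<in> \<int>"
        using k(4) vec_v_latt by blast
      then have "2 * c / 3 \<in> \<int>"
        using k6 by (simp add: bf_sum_gram c_def)
      then have "c / 3 \<in> \<int>"
        using c_int Ints_diff[of c "2 * c / 3"] by simp
      moreover have "c / 3 \<noteq> 0"
        using \<open>c \<noteq> 0\<close> by simp
      ultimately have "1 \<le> c / 3 * (c / 3)"
        by (rule Ints_nonzero_square_ge1)
      then show False
        using ww u_pos k6 by linarith
    qed
  qed
qed

lemma upper_half_ball_off_mirrors:
  assumes L: "lorentzian (sum_gram G)" and y: "y \<in> off_mirrors G"
  obtains r where "r > 0" "ball (emb y) r \<inter> {x. x $ None > 0} \<subseteq> off_mirrors (sum_gram G)"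
proof -
  let ?S = "sum_gram G"
  have "bf ?S (emb y) (emb y) < 0"
    using y by (simp add: bf_sum_gram off_mirrors_def negcone_def)
  then obtain r where r: "r > 0" "ball (emb y) r \<subseteq> negcone ?S"
    "\<And>w x. w \<in> V ?S 2 \<union> V ?S 6 \<Longrightarrow> x \<in> ball (emb y) r \<Longrightarrow> bf ?S w x = 0 \<Longrightarrow> bf ?S w (emb y) = 0"
    using mirrors_locally_finite[OF L] by blast
  have "x $ None = 0" if x: "x \<in> ball (emb y) r" "x \<in> mirrors ?S" for x
  proof -
    obtain w where w: "w \<in> V ?S 2 \<union> V ?S 6" "bf ?S w x = 0"
      using x(2) unfolding mirrors_def by blast
    have "proj w = 0"
      using root_orthogonal_emb_in_Zv[OF lorentzian_sum_gram_imp[OF L] y w(1) r(3)[OF w(1) x(1) w(2)]] .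
    moreover have "w \<noteq> 0"
      using w(1) by (auto simp: V_def)
    ultimately have "w $ None \<noteq> 0"
      using emb_proj_add_vec_v[of w] by auto
    then show ?thesis
      using w(2) \<open>proj w = 0\<close> by (simp add: bf_sum_gram)
  qed
  then have "ball (emb y) r \<inter> {x. x $ None > 0} \<subseteq> off_mirrors ?S"
    using r(2) by (fastforce simp: off_mirrors_def)
  then show ?thesis
    using that r(1) by blast
qed

lemma connected_upper_half_ball: "connected (ball (emb y) r \<inter> {x. x $ None > 0})"
proof -
  have "{x. x $ None > 0} = {x. vec_v \<bullet> x > (0::real)}"
    by (simp add: inner_vec_def sum_option_UNIV)
  then show ?thesis
    by (metis convex_Int convex_ball convex_halfspace_gt convex_connected)
qed

lemma upper_point_in_half_ball:
  assumes "0 < t" "t < r"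
  shows "emb y + t *\<^sub>R vec_v \<in> ball (emb y) r \<inter> {x. x $ None > 0}"
proof -
  have "norm (vec_v :: real^('a option)) = 1"
    by (simp add: norm_vec_def L2_set_def sum_option_UNIV)
  then show ?thesis
    using assms by (simp add: dist_norm)
qed

definition above_in :: "(real^('n::finite option)) set \<Rightarrow> real^'n \<Rightarrow> bool" where
  "above_in K y \<longleftrightarrow> (\<exists>r>0. ball (emb y) r \<inter> {x. x $ None > 0} \<subseteq> K)"

lemma above_in_meets:
  assumes "above_in K z" "s > 0"
  shows "K \<inter> (ball (emb z) s \<inter> {x. x $ None > 0}) \<noteq> {}"
proof -
  obtain r where r: "r > 0" "ball (emb z) r \<inter> {x. x $ None > 0} \<subseteq> K"
    using assms(1) by (auto simp: above_in_def)
  have "emb z + (min r s / 2) *\<^sub>R vec_v \<in> ball (emb z) r \<inter> {x. x $ None > 0}"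
    "emb z + (min r s / 2) *\<^sub>R vec_v \<in> ball (emb z) s \<inter> {x. x $ None > 0}"
    using upper_point_in_half_ball[of "min r s / 2" r z] upper_point_in_half_ball[of "min r s / 2" s z]
      r(1) assms(2) by auto
  then show ?thesis
    using r(2) by blast
qed

lemma above_in_locally_constant:
  assumes L: "lorentzian (sum_gram G)" and y: "y \<in> off_mirrors G"
    and K: "K \<in> components (off_mirrors (sum_gram G))"
  obtains e where "e > 0" "\<And>y'. dist y y' < e \<Longrightarrow> above_in K y' \<longleftrightarrow> above_in K y"
proof -
  obtain r where r: "r > 0" and H: "ball (emb y) r \<inter> {x. x $ None > 0} \<subseteq> off_mirrors (sum_gram G)"
    using upper_half_ball_off_mirrors[OF L y] by blast
  let ?H = "ball (emb y) r \<inter> {x. x $ None > 0}"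
  have sub: "ball (emb y') (r / 2) \<subseteq> ball (emb y) r" if "dist y y' < r / 2" for y'
    using that by (simp add: ball_subset_ball_iff dist_commute)
  have "?H \<subseteq> K \<or> K \<inter> ?H = {}"
    using components_maximal[OF K connected_upper_half_ball H] by blast
  show ?thesis
  proof (rule that[of "r / 2"])
    show "r / 2 > 0"
      using r by simp
    fix y' assume d: "dist y y' < r / 2"
    show "above_in K y' \<longleftrightarrow> above_in K y"
    proof (cases "?H \<subseteq> K")
      case True
      then have "above_in K y" "above_in K y'"
        using r sub[OF d] unfolding above_in_def by (blast, meson half_gt_zero order_trans Int_mono order_refl)
      then show ?thesis
        by simp
    next
      case False
      then have "K \<inter> ?H = {}"
        using \<open>?H \<subseteq> K \<or> K \<inter> ?H = {}\<close> by blast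
      then have "\<not> above_in K y" "\<not> above_in K y'"
        using above_in_meets[of K y r] above_in_meets[of K y' "r / 2"] r sub[OF d] by auto
      then show ?thesis
        by simp
    qed
  qed
qed

lemma above_in_constant_on_component:
  assumes L: "lorentzian (sum_gram G)" and Kv: "Kv \<in> components (off_mirrors G)"
    and K: "K \<in> components (off_mirrors (sum_gram G))"
    and y: "y \<in> Kv" "y' \<in> Kv" and above: "above_in K y"
  shows "above_in K y'"
proof (rule connected_induction_simple[where P = "above_in K", OF in_components_connected[OF Kv] y above])
  fix a assume a: "a \<in> Kv"
  then have "a \<in> off_mirrors G"
    using Kv in_components_subset by blast
  then obtain e where e: "e > 0" "\<And>y'. dist a y' < e \<Longrightarrow> above_in K y' \<longleftrightarrow> above_in K a"
    using above_in_locally_constant[OF L _ K] by blast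
  have "\<forall>x\<in>Kv \<inter> ball a e. \<forall>z\<in>Kv \<inter> ball a e. above_in K x \<longrightarrow> above_in K z"
    using e(2) by simp
  moreover have "openin (top_of_set Kv) (Kv \<inter> ball a e)"
    by (rule openin_open_Int) simp
  ultimately show "\<exists>T. openin (top_of_set Kv) T \<and> a \<in> T \<and> (\<forall>x\<in>T. \<forall>z\<in>T. above_in K x \<longrightarrow> above_in K z)"
    using a e(1) by (intro exI[of _ "Kv \<inter> ball a e"]) simp
qed

lemma exists_component_above:
  assumes L: "lorentzian (sum_gram G)" and y: "y \<in> off_mirrors G"
  obtains K where "K \<in> components (off_mirrors (sum_gram G))" "above_in K y"
proof -
  obtain r where r: "r > 0" and H: "ball (emb y) r \<inter> {x. x $ None > 0} \<subseteq> off_mirrors (sum_gram G)"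
    using upper_half_ball_off_mirrors[OF L y] by blast
  define p where "p = emb y + (r / 2) *\<^sub>R vec_v"
  have p: "p \<in> ball (emb y) r \<inter> {x. x $ None > 0}"
    unfolding p_def using r by (intro upper_point_in_half_ball) auto
  define K where "K = connected_component_set (off_mirrors (sum_gram G)) p"
  have "K \<in> components (off_mirrors (sum_gram G))"
    using p H unfolding K_def by (blast intro: componentsI)
  moreover have "ball (emb y) r \<inter> {x. x $ None > 0} \<subseteq> K"
    unfolding K_def by (rule connected_component_maximal[OF p connected_upper_half_ball H])
  ultimately show ?thesis
    using that r unfolding above_in_def by blast
qed

lemma sum_ext_fixes_component_above:
  assumes M: "aut G Mv" and K: "K \<in> components (off_mirrors (sum_gram G))"
    and above: "above_in K y" "above_in K (Mv *v y)"
  shows "(\<lambda>x. sum_ext Mv *v x) ` K = K"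
proof -
  obtain r1 where r1: "r1 > 0" "ball (emb y) r1 \<inter> {x. x $ None > 0} \<subseteq> K"
    using above(1) by (auto simp: above_in_def)
  obtain r2 where r2: "r2 > 0" "ball (emb (Mv *v y)) r2 \<inter> {x. x $ None > 0} \<subseteq> K"
    using above(2) by (auto simp: above_in_def)
  define t where "t = min r1 r2 / 2"
  have t: "0 < t" "t < r1" "t < r2"
    using r1(1) r2(1) by (auto simp: t_def)
  have q: "emb y + t *\<^sub>R vec_v \<in> K"
    using upper_point_in_half_ball[OF t(1,2), of y] r1(2) by blast
  have "sum_ext Mv *v (emb y + t *\<^sub>R vec_v) = emb (Mv *v y) + t *\<^sub>R vec_v"
    by (simp add: matrix_vector_right_distrib matrix_vector_mult_scaleR)
  then have "sum_ext Mv *v (emb y + t *\<^sub>R vec_v) \<in> K"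
    using upper_point_in_half_ball[OF t(1,3), of "Mv *v y"] r2(2) by auto
  moreover have "(\<lambda>x. sum_ext Mv *v x) ` K \<in> components (off_mirrors (sum_gram G))"
    by (rule aut_image_component[OF aut_sum_ext[OF M] K])
  ultimately show ?thesis
    using components_eq[OF _ K] q by blast
qed

lemma cell_direct_sum_ext:
  assumes L: "lorentzian (sum_gram G)" and M: "aut G Mv" and dir: "cell_direct G Mv Pv"
  shows "\<exists>P. cell (sum_gram G) P \<and> preserves (sum_ext Mv) P \<and> cell_direct (sum_gram G) (sum_ext Mv) P"
proof -
  obtain Qv where Qv: "cell_lift G Pv Qv" "(\<lambda>x. Mv *v x) ` Qv = Qv"
    using dir by (auto simp: cell_direct_def)
  obtain Kv where Kv: "Kv \<in> components (off_mirrors G)" "Qv = closure Kv \<inter> negcone G"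
    using Qv(1) by (auto simp: cell_lift_def half_cell_def off_mirrors_def)
  obtain y where y: "y \<in> Kv"
    using in_components_nonempty[OF Kv(1)] by blast
  have "(\<lambda>x. Mv *v x) ` Kv = Kv"
    using aut_fixes_component[OF lorentzian_sum_gram_imp[OF L] M Kv(1)] Qv(2) Kv(2) by simp
  then have My: "Mv *v y \<in> Kv"
    using y by blast
  have "y \<in> off_mirrors G"
    using y Kv(1) in_components_subset by blast
  then obtain K where K: "K \<in> components (off_mirrors (sum_gram G))" "above_in K y"
    using exists_component_above[OF L] by blast
  have "above_in K (Mv *v y)"
    by (rule above_in_constant_on_component[OF L Kv(1) K(1) y My K(2)])
  then have "(\<lambda>x. sum_ext Mv *v x) ` K = K"
    by (rule sum_ext_fixes_component_above[OF M K])
  then show ?thesis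
    by (rule cell_of_invariant_component[OF aut_sum_ext[OF M] K(1)])
qed

lemma good_lattice_lorentzian: "good_lattice H \<Longrightarrow> lorentzian H"
  by (simp add: good_lattice_def integral_gram_def hyperbolic_sig_imp_lorentzian)

lemma reversing_direct_extension:
  assumes L: "lorentzian (sum_gram G)"
    and Mv: "aut G Mv" "cell_direct G Mv Pv" "\<not> z3_direct G Mv"
  shows "\<exists>M. aut (sum_gram G) M \<and> (\<forall>x. M *v emb x = emb (Mv *v x)) \<and>
    \<not> z3_direct (sum_gram G) M \<and> (\<exists>P. cell (sum_gram G) P \<and> preserves M P \<and> cell_direct (sum_gram G) M P)"
  using aut_sum_ext[OF Mv(1)] not_z3_direct_sum_ext[OF Mv(3)] cell_direct_sum_ext[OF L Mv(1,2)]
  by auto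

lemma achiral_sum_gram:
  assumes good: "good_lattice (sum_gram G)" and chiral: "achiral G"
  shows "achiral (sum_gram G)"
proof -
  let ?S = "sum_gram G"
  have L: "lorentzian ?S"
    using good by (rule good_lattice_lorentzian)
  have card: "card (disc3 ?S // latt_cong (disc3 ?S)) = 3"
    using good by (simp add: good_lattice_def disc_ok_def)
  obtain P M where P: "cell G P" and M: "aut G M" "preserves M P" "z3_direct G M" "\<not> cell_direct G M P"
    using chiral unfolding achiral_def by blast
  obtain x where "x \<in> disc3 G" "x \<notin> latt"
    using disc3_nontrivial_of_sum_gram[OF card] by blast
  then have "\<not> z3_direct G (- M)"
    by (rule not_z3_direct_uminus[OF M(3)])
  moreover have "cell_direct G (- M) P"
    using cell_direct_uminus_iff[OF lorentzian_sum_gram_imp[OF L] M(1) P M(2)] M(4) by blast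
  ultimately obtain M' P' where M': "aut ?S M'" "\<not> z3_direct ?S M'" and
    P': "cell ?S P'" "preserves M' P'" "cell_direct ?S M' P'"
    using reversing_direct_extension[OF L aut_uminus[OF M(1)]] by blast
  then show "achiral ?S"
    unfolding achiral_def
    using aut_uminus[OF M'(1)] preserves_uminus[OF P'(1,2)] z3_direct_uminus[OF card M']
      cell_direct_uminus_iff[OF L M'(1) P'(1,2)] by blast
qed

theorem lemma7p7p1:
  fixes G :: "real^'n^'n"
  assumes "good_lattice (sum_gram G)"
  shows "(achiral G \<longrightarrow> achiral (sum_gram G)) \<and>
    (\<forall>Pv Mv. cell G Pv \<and> aut G Mv \<and> preserves Mv Pv \<and> cell_direct G Mv Pv \<and>
       \<not> z3_direct G Mv \<longrightarrow>
       (\<exists>M. aut (sum_gram G) M \<and> (\<forall>x. M *v emb x = emb (Mv *v x)) \<and>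
          \<not> z3_direct (sum_gram G) M \<and>
          (\<exists>P. cell (sum_gram G) P \<and> preserves M P \<and> cell_direct (sum_gram G) M P)))"
  using achiral_sum_gram[OF assms] reversing_direct_extension[OF good_lattice_lorentzian[OF assms]]
  by blast

end
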